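(* Let $Q=(q_n)_{n\ge1}$ be a basic sequence that is infinite in limit. For each integer $i\ge1$ set $$\bar\varepsilon_i=\frac{\left(\sum_{j=1}^i 2l_j\right)+i+1}{\left(\sum_{j=1}^i jl_j\right)+i+1},$$ and for each positive integer $n$ let $i(n)$ be the unique integer with $L_{i(n)}<n\le L_{i(n)+1}$. Then $\lim_{n\to\infty}\bar\varepsilon_{i(n)}=0$.
   Context: A basic sequence is a sequence $Q=(q_n)_{n\ge1}$ of integers with $q_n\ge 2$; it is infinite in limit if $q_n\to\infty$. $\mathbb{N}$ denotes the positive integers. For each positive integer $j$ let $\nu_j=\min\{N : q_m\ge 2j^2 \text{ for all } m\ge N\}$. Define $l_1=\max(\nu_2-1,1)$ and, recursively for $i\ge 2$, $l_i=\max\big(\min\{k\in\mathbb{N} : l_1+2l_2+\cdots+(i-1)l_{i-1}+ik\ge \nu_{i+1}-1\},1\big)$. Put $L_i=\sum_{j=1}^i jl_j$, with $L_0=0$. *)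

theory Defs
  imports Complex_Main
begin

text \<open>Sequences are indexed from 1; the value at index 0 is irrelevant.\<close>

definition basic_seq :: "(nat \<Rightarrow> nat) \<Rightarrow> bool" where
  "basic_seq q \<longleftrightarrow> (\<forall>n\<ge>1. q n \<ge> 2)"

definition infinite_in_limit :: "(nat \<Rightarrow> nat) \<Rightarrow> bool" where
  "infinite_in_limit q \<longleftrightarrow> filterlim q at_top sequentially"

definition nu :: "(nat \<Rightarrow> nat) \<Rightarrow> nat \<Rightarrow> nat" where
  "nu q j = (LEAST N. N \<ge> 1 \<and> (\<forall>m\<ge>N. q m \<ge> 2 * j^2))"

text \<open>lstep q i Lprev = l_{i+1}, where Lprev = L_i = l_1 + 2 l_2 + ... + i l_i.\<close>
definition lstep :: "(nat \<Rightarrow> nat) \<Rightarrow> nat \<Rightarrow> nat \<Rightarrow> nat" where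
  "lstep q i Lprev =
     (if i = 0 then max (nu q 2 - 1) 1
      else max (LEAST k. k \<ge> 1 \<and> Lprev + Suc i * k \<ge> nu q (i + 2) - 1) 1)"

fun LL :: "(nat \<Rightarrow> nat) \<Rightarrow> nat \<Rightarrow> nat" where
  "LL q 0 = 0"
| "LL q (Suc i) = LL q i + Suc i * lstep q i (LL q i)"

definition ll :: "(nat \<Rightarrow> nat) \<Rightarrow> nat \<Rightarrow> nat" where
  "ll q i = (if i = 0 then 0 else lstep q (i - 1) (LL q (i - 1)))"

definition eps_bar :: "(nat \<Rightarrow> nat) \<Rightarrow> nat \<Rightarrow> real" where
  "eps_bar q i = ((\<Sum>j=1..i. 2 * real (ll q j)) + real i + 1) /
                 ((\<Sum>j=1..i. real j * real (ll q j)) + real i + 1)"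

definition i_of :: "(nat \<Rightarrow> nat) \<Rightarrow> nat \<Rightarrow> nat" where
  "i_of q n = (THE i. LL q i < n \<and> n \<le> LL q (Suc i))"

end

theory Submission
  imports Defs "HOL-Real_Asymp.Real_Asymp"
begin

text \<open>Since \<open>l\<^sub>j \<ge> 1\<close>, the denominator of \<open>\<epsilon>\<^sub>i\<close> grows quadratically in \<open>i\<close>. In the numerator the terms
  \<open>l\<^sub>j\<close> with \<open>j > M\<close> are at most \<open>j l\<^sub>j / M\<close>, so \<open>\<epsilon>\<^sub>i \<le> O\<^sub>M(1/i) + 2/M\<close> and hence
  \<open>\<epsilon>\<^sub>i \<rightarrow> 0\<close>. Because \<open>L\<^sub>i\<close> is strictly increasing with \<open>L\<^sub>0 = 0\<close>, \<open>i(n)\<close> is well defined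
  and tends to infinity, so \<open>\<epsilon>\<^bsub>i(n)\<^esub> \<rightarrow> 0\<close> as well.\<close>

lemma sum_le_head_plus_weighted_tail:
  fixes a :: "nat \<Rightarrow> real"
  assumes nonneg: "\<And>j. a j \<ge> 0" and "M \<ge> 1"
  shows "(\<Sum>j=1..i. a j) \<le> (\<Sum>j=1..M. a j) + (\<Sum>j=1..i. real j * a j) / real M"
proof -
  have pointwise: "a j \<le> (if j \<le> M then a j else 0) + real j * a j / real M" for j
  proof (cases "j \<le> M")
    case False
    then have "real M * a j \<le> real j * a j" using nonneg by (simp add: mult_right_mono)
    with False \<open>M \<ge> 1\<close> show ?thesis by (simp add: field_simps)
  qed (use nonneg \<open>M \<ge> 1\<close> in simp)
  have "(\<Sum>j=1..i. a j) \<le> (\<Sum>j=1..i. if j \<le> M then a j else 0) + (\<Sum>j=1..i. real j * a j) / real M"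
    unfolding sum_divide_distrib sum.distrib[symmetric] by (rule sum_mono) (rule pointwise)
  also have "(\<Sum>j=1..i. if j \<le> M then a j else 0) = (\<Sum>j=1..min i M. a j)"
    by (rule sum.mono_neutral_cong_right) auto
  also have "\<dots> \<le> (\<Sum>j=1..M. a j)"
    by (rule sum_mono2) (use nonneg in auto)
  finally show ?thesis by simp
qed

lemma sum_atLeast1_real: "(\<Sum>j=1..i. real j) = real i * (real i + 1) / 2"
  by (induction i) (auto simp: field_simps)

lemma weighted_ratio_bound:
  fixes a :: "nat \<Rightarrow> real"
  assumes ge1: "\<And>j. j \<ge> 1 \<Longrightarrow> a j \<ge> 1" and nonneg: "\<And>j. a j \<ge> 0" and M: "M \<ge> 1"
  shows "((\<Sum>j=1..i. 2 * a j) + real i + 1) / ((\<Sum>j=1..i. real j * a j) + real i + 1)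
           \<le> (4 * (\<Sum>j=1..M. a j) + 2) / (real i + 1) + 2 / real M"
proof -
  define C where "C = (\<Sum>j=1..M. a j)"
  define S where "S = (\<Sum>j=1..i. real j * a j)"
  define D where "D = S + real i + 1"
  have "C \<ge> 0" unfolding C_def by (simp add: sum_nonneg nonneg)
  have "real i * (real i + 1) / 2 \<le> S"
    unfolding sum_atLeast1_real[symmetric] S_def by (rule sum_mono) (use ge1 in auto)
  then have D_ge: "(real i + 1) * (real i + 2) / 2 \<le> D" unfolding D_def by (simp add: field_simps)
  have "S \<ge> 0" unfolding S_def by (simp add: sum_nonneg nonneg)
  then have "D > 0" "S / D \<le> 1" unfolding D_def by auto
  have "(\<Sum>j=1..i. 2 * a j) + real i + 1 \<le> (2 * C + real i + 1) + 2 * S / real M"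
    using sum_le_head_plus_weighted_tail[of a M i, OF nonneg M]
    by (simp add: C_def S_def sum_distrib_left[symmetric])
  then have "((\<Sum>j=1..i. 2 * a j) + real i + 1) / D \<le> ((2 * C + real i + 1) + 2 * S / real M) / D"
    using \<open>D > 0\<close> by (simp add: divide_right_mono)
  also have "\<dots> = (2 * C + real i + 1) / D + 2 * (S / D) / real M"
    by (simp add: add_divide_distrib)
  also have "(2 * C + real i + 1) / D \<le> (2 * C + real i + 1) / ((real i + 1) * (real i + 2) / 2)"
    by (rule divide_left_mono) (use D_ge \<open>C \<ge> 0\<close> \<open>D > 0\<close> in auto)
  also have "\<dots> \<le> (4 * C + 2) / (real i + 1)"
    using \<open>C \<ge> 0\<close> by (simp add: divide_simps) (simp add: algebra_simps)
  also have "2 * (S / D) / real M \<le> 2 / real M"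
    using \<open>S / D \<le> 1\<close> M by (intro divide_right_mono) auto
  finally show ?thesis unfolding C_def D_def S_def by simp
qed

lemma weighted_ratio_tendsto_zero:
  fixes a :: "nat \<Rightarrow> real"
  assumes ge1: "\<And>j. j \<ge> 1 \<Longrightarrow> a j \<ge> 1" and nonneg: "\<And>j. a j \<ge> 0"
  shows "(\<lambda>i. ((\<Sum>j=1..i. 2 * a j) + real i + 1) / ((\<Sum>j=1..i. real j * a j) + real i + 1))
           \<longlonglongrightarrow> 0" (is "?r \<longlonglongrightarrow> 0")
proof (rule tendstoI)
  fix e :: real
  assume "e > 0"
  obtain M :: nat where "4 / e < real M"
    using reals_Archimedean2 by blast
  moreover have "0 < 4 / e"
    using \<open>e > 0\<close> by simp
  ultimately have "real M > 0"
    by linarith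
  then have "M \<ge> 1"
    by simp
  from \<open>4 / e < real M\<close> \<open>e > 0\<close> have M_small: "2 / real M < e / 2"
    using \<open>M \<ge> 1\<close> by (simp add: field_simps)
  define C where "C = (\<Sum>j=1..M. a j)"
  have "(\<lambda>i. (4 * C + 2) / (real i + 1)) \<longlonglongrightarrow> 0"
    by real_asymp
  then have "eventually (\<lambda>i. (4 * C + 2) / (real i + 1) < e / 2) sequentially"
    by (rule order_tendstoD(2)) (simp add: \<open>e > 0\<close>)
  then show "eventually (\<lambda>i. dist (?r i) 0 < e) sequentially"
  proof (rule eventually_mono)
    fix i
    assume "(4 * C + 2) / (real i + 1) < e / 2"
    moreover have "?r i \<le> (4 * C + 2) / (real i + 1) + 2 / real M"
      unfolding C_def by (rule weighted_ratio_bound[OF ge1 nonneg \<open>M \<ge> 1\<close>])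
    moreover have "?r i \<ge> 0"
      by (intro divide_nonneg_nonneg add_nonneg_nonneg sum_nonneg) (auto simp: nonneg)
    ultimately show "dist (?r i) 0 < e"
      using M_small unfolding dist_real_def by linarith
  qed
qed

lemma strict_mono_bracket_unique:
  fixes f :: "nat \<Rightarrow> nat"
  assumes "strict_mono f" and "f 0 = 0" and "n \<ge> 1"
  shows "\<exists>!i. f i < n \<and> n \<le> f (Suc i)"
proof (rule ex_ex1I)
  have "\<not> n \<le> f 0" and "n \<le> f n"
    using assms by (auto intro: seq_suble)
  then obtain k where "\<not> n \<le> f k" and "n \<le> f (Suc k)"
    using ex_least_nat_less[of "\<lambda>k. n \<le> f k"] by blast
  then show "\<exists>i. f i < n \<and> n \<le> f (Suc i)"
    by (intro exI[of _ k]) simp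
next
  fix i j
  assume "f i < n \<and> n \<le> f (Suc i)" and "f j < n \<and> n \<le> f (Suc j)"
  then have "\<not> Suc i \<le> j" and "\<not> Suc j \<le> i"
    using strict_mono_less_eq[OF \<open>strict_mono f\<close>] by (meson leD le_less_trans)+
  then show "i = j"
    by simp
qed

lemma lstep_ge1: "lstep q i L \<ge> 1"
  unfolding lstep_def by simp

lemma ll_ge1: "j \<ge> 1 \<Longrightarrow> ll q j \<ge> 1"
  unfolding ll_def using lstep_ge1 by auto

lemma strict_mono_LL: "strict_mono (LL q)"
  by (rule strict_mono_Suc_iff[THEN iffD2]) (use lstep_ge1 in \<open>simp add: Suc_le_eq\<close>)

lemma i_of_bracket:
  assumes "n \<ge> 1"
  shows "LL q (i_of q n) < n \<and> n \<le> LL q (Suc (i_of q n))"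
  unfolding i_of_def by (rule theI') (rule strict_mono_bracket_unique[OF strict_mono_LL _ assms], simp)

lemma i_of_tendsto_at_top: "filterlim (i_of q) at_top sequentially"
proof (rule filterlim_at_top_ge[where c = 0, THEN iffD2], intro allI impI)
  fix N :: nat
  show "eventually (\<lambda>n. N \<le> i_of q n) sequentially"
  proof (rule eventually_sequentiallyI)
    fix n
    assume "Suc (LL q N) \<le> n"
    with i_of_bracket[of n q] have "LL q N < LL q (Suc (i_of q n))"
      by simp
    then show "N \<le> i_of q n"
      using strict_mono_less[OF strict_mono_LL] by (metis less_Suc_eq_le)
  qed
qed

theorem mainTheorem16:
  fixes q :: "nat \<Rightarrow> nat"
  assumes "basic_seq q" and "infinite_in_limit q"
  shows "(\<lambda>n. eps_bar q (i_of q n)) \<longlonglongrightarrow> 0"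
proof -
  have "eps_bar q \<longlonglongrightarrow> 0"
    unfolding eps_bar_def
    by (rule weighted_ratio_tendsto_zero) (use ll_ge1 in auto)
  from filterlim_compose[OF this i_of_tendsto_at_top] show ?thesis
    by simp
qed

end
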